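(* Let $C$ be a self-adjoint positive operator on a separable complex Hilbert space $\mathfrak{h}$ and let $L\in\mathfrak{L}((\mathcal{D}(C),\|\cdot\|_C),\mathfrak{h})$. Then $L\circ\pi_C:(\mathfrak{h},\mathcal{B}(\mathfrak{h}))\to(\mathfrak{h},\mathcal{B}(\mathfrak{h}))$ is measurable.
   Context: $\|x\|_C^2=\|x\|^2+\|Cx\|^2$; $\mathfrak{L}(\mathfrak{X},\mathfrak{Z})$ denotes bounded linear operators; $\pi_C(x)=x$ if $x\in\mathcal{D}(C)$ and $\pi_C(x)=0$ otherwise; $\mathcal{B}(\mathfrak{h})$ is the Borel $\sigma$-algebra. *)

theory Defs
  imports "HOL-Analysis.Analysis"
begin

text \<open>A complex Hilbert space, encoded as a real Hilbert space (complete real inner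
product space) carrying an orthogonal complex structure J (multiplication by i).
Complex scalar multiplication and the complex inner product (conjugate-linear in
the first argument, linear in the second) are derived from it; the norm, topology
and Borel sets are those of the underlying real Hilbert space.\<close>

class complex_hilbert = real_inner + complete_space +
  fixes cJ :: "'a \<Rightarrow> 'a"
  assumes cJ_add: "cJ (x + y) = cJ x + cJ y"
    and cJ_scaleR: "cJ (r *\<^sub>R x) = r *\<^sub>R cJ x"
    and cJ_cJ: "cJ (cJ x) = - x"
    and cJ_inner: "inner (cJ x) (cJ y) = inner x y"

definition cscale :: "complex \<Rightarrow> 'a::complex_hilbert \<Rightarrow> 'a" where
  "cscale z x = Re z *\<^sub>R x + Im z *\<^sub>R cJ x"

definition cinner :: "'a::complex_hilbert \<Rightarrow> 'a \<Rightarrow> complex" where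
  "cinner x y = Complex (inner x y) (inner x (cJ y))"

definition densely_defined_op :: "'a::complex_hilbert set \<Rightarrow> ('a \<Rightarrow> 'a) \<Rightarrow> bool" where
  "densely_defined_op D C \<longleftrightarrow>
     0 \<in> D \<and> (\<forall>x\<in>D. \<forall>y\<in>D. x + y \<in> D) \<and> (\<forall>z x. x \<in> D \<longrightarrow> cscale z x \<in> D) \<and>
     (\<forall>x\<in>D. \<forall>y\<in>D. C (x + y) = C x + C y) \<and>
     (\<forall>z. \<forall>x\<in>D. C (cscale z x) = cscale z (C x)) \<and>
     closure D = UNIV"

text \<open>Self-adjoint: D(C*) = D(C) and C* = C, where
 D(C*) = {y. \<exists>w. \<forall>x\<in>D(C). <Cx,y> = <x,w>} and C* y = w.\<close>
definition self_adjoint_op :: "'a::complex_hilbert set \<Rightarrow> ('a \<Rightarrow> 'a) \<Rightarrow> bool" where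
  "self_adjoint_op D C \<longleftrightarrow> densely_defined_op D C \<and>
     (\<forall>y. y \<in> D \<longleftrightarrow> (\<exists>w. \<forall>x\<in>D. cinner (C x) y = cinner x w)) \<and>
     (\<forall>x\<in>D. \<forall>y\<in>D. cinner (C x) y = cinner x (C y))"

definition positive_op :: "'a::complex_hilbert set \<Rightarrow> ('a \<Rightarrow> 'a) \<Rightarrow> bool" where
  "positive_op D C \<longleftrightarrow> (\<forall>x\<in>D. 0 \<le> Re (cinner x (C x)))"

definition graph_norm :: "('a::complex_hilbert \<Rightarrow> 'a) \<Rightarrow> 'a \<Rightarrow> real" where
  "graph_norm C x = sqrt ((norm x)\<^sup>2 + (norm (C x))\<^sup>2)"

text \<open>L is a bounded complex-linear map (D(C), ||.||_C) \<rightarrow> h (values of L off D are irrelevant).\<close>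
definition bounded_op_from_graph ::
  "'a::complex_hilbert set \<Rightarrow> ('a \<Rightarrow> 'a) \<Rightarrow> ('a \<Rightarrow> 'a) \<Rightarrow> bool" where
  "bounded_op_from_graph D C L \<longleftrightarrow>
     (\<forall>x\<in>D. \<forall>y\<in>D. L (x + y) = L x + L y) \<and>
     (\<forall>z. \<forall>x\<in>D. L (cscale z x) = cscale z (L x)) \<and>
     (\<exists>K. \<forall>x\<in>D. norm (L x) \<le> K * graph_norm C x)"

definition pi_C :: "'a set \<Rightarrow> 'a::zero \<Rightarrow> 'a" where
  "pi_C D x = (if x \<in> D then x else 0)"

end

theory Submission
  imports Defs
begin

text \<open>For t > 0, positivity and self-adjointness make t + C a bijection from D(C) onto the
whole space whose inverse has norm at most 1/t.  Hence J_n = n (n + C)^-1 is a contraction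
from the space into D(C), C J_n = n (1 - J_n) is bounded, and J_n x \<rightarrow> x for every x.
Since C J_n x = J_n C x on D(C) and C is closed, D(C) is exactly the set where the continuous
maps C J_n converge, hence a Borel set, and on it L is the pointwise limit of the continuous
maps L J_n.\<close>

lemma inner_cJ_left: "inner (cJ x) y = - inner x (cJ (y::'a::complex_hilbert))"
  using cJ_inner[of x "cJ y"] by (simp add: cJ_cJ)

lemma bounded_linear_cJ: "bounded_linear (cJ :: 'a::complex_hilbert \<Rightarrow> 'a)"
proof (rule bounded_linear_intro[where K = 1])
  show "norm (cJ x) \<le> norm x * 1" for x :: 'a
    using cJ_inner[of x x] by (simp add: norm_eq_sqrt_inner)
qed (simp_all add: cJ_add cJ_scaleR)

lemma cscale_of_real: "cscale (of_real r) x = r *\<^sub>R x"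
  by (simp add: cscale_def)

lemma cscale_ii: "cscale \<i> x = cJ x"
  by (simp add: cscale_def)

lemma cinner_eq_iff:
  "cinner a b = cinner c d \<longleftrightarrow> inner a b = inner c d \<and> inner a (cJ b) = inner c (cJ d)"
  by (simp add: cinner_def complex_eq_iff)

lemma Re_cinner: "Re (cinner x y) = inner x y"
  by (simp add: cinner_def)

lemma Cauchy_if_dist_le_sum:
  fixes v :: "nat \<Rightarrow> 'a::metric_space"
  assumes "\<And>m n. dist (v m) (v n) \<le> a m + a n" and "a \<longlonglongrightarrow> 0"
  shows "Cauchy v"
proof (rule metric_CauchyI)
  fix e :: real assume "e > 0"
  then obtain M where M: "\<And>n. n \<ge> M \<Longrightarrow> norm (a n) < e / 2"
    using LIMSEQ_D[OF assms(2), of "e / 2"] by auto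
  have "dist (v m) (v n) < e" if "m \<ge> M" and "n \<ge> M" for m n
    using assms(1)[of m n] M[OF that(1)] M[OF that(2)] by auto
  then show "\<exists>M. \<forall>m\<ge>M. \<forall>n\<ge>M. dist (v m) (v n) < e"
    by blast
qed

lemma nearest_point_exists:
  fixes S :: "'a::{real_inner,complete_space} set"
  assumes "closed S" and "convex S" and "S \<noteq> {}"
  obtains p where "p \<in> S" and "\<And>v. v \<in> S \<Longrightarrow> norm (y - p) \<le> norm (y - v)"
proof -
  define d where "d = (INF v\<in>S. (norm (y - v))\<^sup>2)"
  have bdd: "bdd_below ((\<lambda>v. (norm (y - v))\<^sup>2) ` S)"
    by (rule bdd_belowI[where m = 0]) auto
  have d_le: "d \<le> (norm (y - v))\<^sup>2" if "v \<in> S" for v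
    unfolding d_def by (rule cINF_lower[OF bdd that])
  have "\<exists>v\<in>S. (norm (y - v))\<^sup>2 < d + 1 / real (Suc k)" for k
    using cInf_lessD[of "(\<lambda>v. (norm (y - v))\<^sup>2) ` S" "d + 1 / real (Suc k)"] \<open>S \<noteq> {}\<close>
    by (auto simp: d_def)
  then obtain v where vS: "\<And>k. v k \<in> S" and v_lt: "\<And>k. (norm (y - v k))\<^sup>2 < d + 1 / real (Suc k)"
    by metis
  \<comment> \<open>the parallelogram law at the midpoint, which lies in S and hence is no closer to y than d\<close>
  have v_close: "(norm (v k - v j))\<^sup>2 \<le> 2 / real (Suc k) + 2 / real (Suc j)" for k j
  proof -
    have "(1/2) *\<^sub>R v k + (1/2) *\<^sub>R v j \<in> S"
      by (rule convexD[OF \<open>convex S\<close> vS vS]) auto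
    then have "d \<le> (norm (y - ((1/2) *\<^sub>R v k + (1/2) *\<^sub>R v j)))\<^sup>2" by (rule d_le)
    moreover have "(norm (v k - v j))\<^sup>2 = 2 * (norm (y - v k))\<^sup>2 + 2 * (norm (y - v j))\<^sup>2
        - 4 * (norm (y - ((1/2) *\<^sub>R v k + (1/2) *\<^sub>R v j)))\<^sup>2"
      by (simp add: power2_norm_eq_inner inner_commute algebra_simps)
    ultimately show ?thesis using v_lt[of k] v_lt[of j] by linarith
  qed
  have "Cauchy v"
  proof (rule Cauchy_if_dist_le_sum)
    show "dist (v k) (v j) \<le> sqrt (2 / real (Suc k)) + sqrt (2 / real (Suc j))" for k j
      using order_trans[OF real_le_rsqrt[OF v_close[of k j]] sqrt_add_le_add_sqrt]
      by (simp add: dist_norm)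
    show "(\<lambda>k. sqrt (2 / real (Suc k))) \<longlonglongrightarrow> 0"
      using tendsto_real_sqrt[OF LIMSEQ_Suc[OF lim_const_over_n[of 2]]] by simp
  qed
  then obtain p where vp: "v \<longlonglongrightarrow> p"
    using Cauchy_convergent_iff convergent_def by blast
  have "p \<in> S" using closed_sequentially[OF \<open>closed S\<close>] vS vp by blast
  have "(\<lambda>k. (norm (y - v k))\<^sup>2) \<longlonglongrightarrow> (norm (y - p))\<^sup>2"
    by (intro tendsto_intros vp)
  moreover have "(\<lambda>k. d + 1 / real (Suc k)) \<longlonglongrightarrow> d + 0"
    by (intro tendsto_intros LIMSEQ_Suc[OF lim_inverse_n'])
  ultimately have "(norm (y - p))\<^sup>2 \<le> d"
    using v_lt by (auto intro: LIMSEQ_le less_imp_le)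
  then have "(norm (y - p))\<^sup>2 \<le> (norm (y - w))\<^sup>2" if "w \<in> S" for w
    using d_le[OF that] by linarith
  then show ?thesis using that \<open>p \<in> S\<close> by (simp add: power2_le_iff_abs_le)
qed

lemma nearest_point_subspace_orthogonal:
  fixes V :: "'a::real_inner set"
  assumes "subspace V" and "p \<in> V" and "u \<in> V"
    and nearest: "\<And>v. v \<in> V \<Longrightarrow> norm (y - p) \<le> norm (y - v)"
  shows "inner (y - p) u = 0"
proof (rule ccontr)
  define a where "a = inner (y - p) u"
  define b where "b = (norm u)\<^sup>2"
  assume "inner (y - p) u \<noteq> 0"
  then have "a\<^sup>2 > 0" by (simp add: a_def)
  have step: "2 * s * a \<le> s\<^sup>2 * b" for s
  proof -
    have "p + s *\<^sub>R u \<in> V" using assms by (simp add: subspace_add subspace_scale)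
    then have "(norm (y - p))\<^sup>2 \<le> (norm ((y - p) - s *\<^sub>R u))\<^sup>2"
      using nearest by (simp add: algebra_simps)
    also have "\<dots> = (norm (y - p))\<^sup>2 - 2 * s * a + s\<^sup>2 * b"
      unfolding a_def b_def power2_norm_eq_inner
      by (simp add: inner_commute power2_eq_square algebra_simps)
    finally show ?thesis by simp
  qed
  \<comment> \<open>a small step s = a/(b+1) from p towards u would bring p closer to y\<close>
  define s where "s = a / (b + 1)"
  have "b \<ge> 0" by (simp add: b_def)
  then have "s * a > 0"
    using \<open>a\<^sup>2 > 0\<close> by (simp add: s_def power2_eq_square)
  have "s\<^sup>2 * b = (s * a) * (b / (b + 1))"
    using \<open>b \<ge> 0\<close> by (simp add: s_def power2_eq_square field_simps)
  also have "\<dots> \<le> s * a"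
    using \<open>b \<ge> 0\<close> \<open>s * a > 0\<close> by (intro mult_left_le) auto
  finally show False
    using step[of s] \<open>s * a > 0\<close> by linarith
qed

lemma closed_subspace_orthogonal_decomposition:
  fixes V :: "'a::{real_inner,complete_space} set"
  assumes "closed V" and "subspace V"
  obtains p where "p \<in> V" and "\<And>v. v \<in> V \<Longrightarrow> inner (y - p) v = 0"
  using nearest_point_exists[of V y] nearest_point_subspace_orthogonal[of V] assms
  by (metis empty_iff subspace_0 subspace_imp_convex)

lemma tendsto_id_on_dense_equi_lipschitz:
  fixes T :: "nat \<Rightarrow> 'a::real_normed_vector \<Rightarrow> 'a"
  assumes dense: "closure S = UNIV"
    and lipschitz: "\<And>n x z. norm (T n x - T n z) \<le> B * norm (x - z)"
    and tendsto_on_S: "\<And>z. z \<in> S \<Longrightarrow> (\<lambda>n. T n z) \<longlonglongrightarrow> z"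
  shows "(\<lambda>n. T n y) \<longlonglongrightarrow> y"
proof (rule LIMSEQ_I)
  fix e :: real assume "e > 0"
  define d where "d = e / 2 / (\<bar>B\<bar> + 1)"
  have "d > 0" using \<open>e > 0\<close> by (simp add: d_def)
  have d_scaled: "(\<bar>B\<bar> + 1) * d = e / 2"
    using abs_ge_zero[of B] by (simp add: d_def divide_simps)
  obtain z where "z \<in> S" and "dist z y < d"
    using dense closure_approachable[of y S] \<open>d > 0\<close> by blast
  then have yz: "norm (y - z) < d" by (simp add: dist_norm norm_minus_commute)
  obtain N where N: "\<And>n. n \<ge> N \<Longrightarrow> norm (T n z - z) < e / 2"
    using LIMSEQ_D[OF tendsto_on_S[OF \<open>z \<in> S\<close>], of "e / 2"] \<open>e > 0\<close> by auto
  have "norm (T n y - y) < e" if "n \<ge> N" for n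
  proof -
    have "norm (T n y - y) \<le> norm (T n y - T n z) + norm (T n z - z) + norm (y - z)"
      using norm_triangle_ineq[of "T n y - T n z" "T n z - z"]
        norm_triangle_ineq[of "T n y - T n z + (T n z - z)" "z - y"]
      by (simp add: norm_minus_commute[of z y])
    also have "\<dots> < (\<bar>B\<bar> + 1) * d + e / 2"
      using lipschitz[of n y z] abs_ge_self[of B] N[OF that] yz
        mult_right_mono[of B "\<bar>B\<bar>" "norm (y - z)"]
        mult_left_mono[of "norm (y - z)" d "\<bar>B\<bar>"]
      by (simp add: algebra_simps)
    also have "\<dots> = e" by (simp add: d_scaled)
    finally show ?thesis .
  qed
  then show "\<exists>N. \<forall>n\<ge>N. norm (T n y - y) < e" by blast
qed

lemma sets_borel_Cauchy_continuous:
  fixes f :: "nat \<Rightarrow> 'a::topological_space \<Rightarrow> 'b::metric_space"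
  assumes "\<And>i. continuous_on UNIV (f i)"
  shows "{x. Cauchy (\<lambda>i. f i x)} \<in> sets borel"
proof -
  have [measurable]: "(\<lambda>x. dist (f m x) (f n x)) \<in> borel_measurable borel" for m n
    by (intro borel_measurable_continuous_onI continuous_on_dist assms)
  have "{x \<in> space borel. \<forall>j. \<exists>M. \<forall>m\<ge>M. \<forall>n\<ge>M. dist (f m x) (f n x) < inverse (real (Suc j))}
      \<in> sets borel"
    by measurable
  then show ?thesis by (simp add: metric_Cauchy_iff2)
qed

lemma borel_measurable_if_LIMSEQ_continuous:
  fixes f :: "nat \<Rightarrow> 'a::topological_space \<Rightarrow> 'b::metric_space"
  assumes "A \<in> sets borel" and "\<And>i. continuous_on UNIV (f i)"
    and "\<And>x. x \<in> A \<Longrightarrow> (\<lambda>i. f i x) \<longlonglongrightarrow> g x"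
  shows "(\<lambda>x. if x \<in> A then g x else c) \<in> borel_measurable borel"
proof -
  have "g \<in> borel_measurable (restrict_space borel A)"
  proof (rule borel_measurable_LIMSEQ_metric)
    show "f i \<in> borel_measurable (restrict_space borel A)" for i
      by (intro measurable_restrict_space1 borel_measurable_continuous_onI assms(2))
  qed (use assms(3) in \<open>simp add: space_restrict_space\<close>)
  then show ?thesis
    using measurable_restrict_space_iff[of A borel c borel g] assms(1) by simp
qed

lemma bounded_op_from_graph_bound:
  assumes "bounded_op_from_graph D C L"
  obtains K where "K \<ge> 0" and "\<And>x. x \<in> D \<Longrightarrow> norm (L x) \<le> K * (norm x + norm (C x))"
proof -
  obtain K where K: "\<And>x. x \<in> D \<Longrightarrow> norm (L x) \<le> K * graph_norm C x"
    using assms unfolding bounded_op_from_graph_def by blast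
  have "norm (L x) \<le> \<bar>K\<bar> * (norm x + norm (C x))" if "x \<in> D" for x
  proof -
    have "K * graph_norm C x \<le> \<bar>K\<bar> * graph_norm C x"
      by (intro mult_right_mono) (auto simp: graph_norm_def)
    also have "\<dots> \<le> \<bar>K\<bar> * (norm x + norm (C x))"
      unfolding graph_norm_def by (intro mult_left_mono sqrt_sum_squares_le_sum) auto
    finally show ?thesis using K[OF that] by linarith
  qed
  then show ?thesis using that[of "\<bar>K\<bar>"] by simp
qed

locale positive_self_adjoint =
  fixes D :: "'a::complex_hilbert set" and C :: "'a \<Rightarrow> 'a"
  assumes self_adjoint: "self_adjoint_op D C" and positive: "positive_op D C"
begin

lemma densely_defined: "densely_defined_op D C"
  using self_adjoint unfolding self_adjoint_op_def by blast

lemma subspace_domain: "subspace D"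
proof -
  have "cscale (of_real r) x \<in> D" if "x \<in> D" for r x
    using densely_defined that unfolding densely_defined_op_def by blast
  then show ?thesis
    using densely_defined unfolding densely_defined_op_def subspace_def
    by (simp add: cscale_of_real)
qed

lemma cJ_in_domain: "x \<in> D \<Longrightarrow> cJ x \<in> D"
  using densely_defined cscale_ii[of x] unfolding densely_defined_op_def by metis

lemma closure_domain: "closure D = UNIV"
  using densely_defined unfolding densely_defined_op_def by blast

lemma C_add: "x \<in> D \<Longrightarrow> y \<in> D \<Longrightarrow> C (x + y) = C x + C y"
  using densely_defined unfolding densely_defined_op_def by blast

lemma C_scaleR: "x \<in> D \<Longrightarrow> C (r *\<^sub>R x) = r *\<^sub>R C x"
  using densely_defined cscale_of_real[of r] unfolding densely_defined_op_def by metis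

lemma C_diff: "x \<in> D \<Longrightarrow> y \<in> D \<Longrightarrow> C (x - y) = C x - C y"
  using C_add[of x "- y"] C_scaleR[of y "- 1"] subspace_neg[OF subspace_domain] by simp

lemma C_cJ: "x \<in> D \<Longrightarrow> C (cJ x) = cJ (C x)"
  using densely_defined cscale_ii[of x] cscale_ii[of "C x"] unfolding densely_defined_op_def by metis

lemma in_domain_iff: "y \<in> D \<longleftrightarrow> (\<exists>w. \<forall>x\<in>D. cinner (C x) y = cinner x w)"
  using self_adjoint unfolding self_adjoint_op_def by blast

lemma cinner_C_symmetric: "x \<in> D \<Longrightarrow> y \<in> D \<Longrightarrow> cinner (C x) y = cinner x (C y)"
  using self_adjoint unfolding self_adjoint_op_def by blast

lemma inner_C_nonneg: "x \<in> D \<Longrightarrow> 0 \<le> inner x (C x)"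
  using positive unfolding positive_op_def by (simp add: Re_cinner)

lemma orthogonal_domain_eq_0:
  assumes "\<And>z. z \<in> D \<Longrightarrow> inner z v = 0"
  shows "v = 0"
proof -
  obtain z where "\<And>k. z k \<in> D" and "z \<longlonglongrightarrow> v"
    using closure_domain closure_sequential[of v D] by blast
  then have "(\<lambda>k. inner (z k) v) \<longlonglongrightarrow> inner v v"
    by (intro tendsto_intros)
  moreover have "(\<lambda>k. inner (z k) v) = (\<lambda>k. 0)"
    using assms \<open>\<And>k. z k \<in> D\<close> by simp
  ultimately show ?thesis
    by (simp add: LIMSEQ_const_iff)
qed

lemma closed_graph:
  assumes xD: "\<And>k. x k \<in> D" and "x \<longlonglongrightarrow> a" and "(\<lambda>k. C (x k)) \<longlonglongrightarrow> b"
  shows "a \<in> D" and "C a = b"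
proof -
  have adjoint_eq: "cinner (C z) a = cinner z b" if "z \<in> D" for z
  proof -
    have sym: "inner (C z) (x k) = inner z (C (x k))"
        "inner (C z) (cJ (x k)) = inner z (cJ (C (x k)))" for k
      using cinner_C_symmetric[OF that xD[of k]] by (simp_all add: cinner_eq_iff)
    have cJ_x: "(\<lambda>k. cJ (x k)) \<longlonglongrightarrow> cJ a" and cJ_Cx: "(\<lambda>k. cJ (C (x k))) \<longlonglongrightarrow> cJ b"
      using assms(2,3) by (simp_all add: bounded_linear.tendsto[OF bounded_linear_cJ])
    have "(\<lambda>k. inner (C z) (x k)) \<longlonglongrightarrow> inner (C z) a"
      "(\<lambda>k. inner (C z) (cJ (x k))) \<longlonglongrightarrow> inner (C z) (cJ a)"
      using assms(2) cJ_x by (auto intro: tendsto_inner)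
    moreover have "(\<lambda>k. inner (C z) (x k)) \<longlonglongrightarrow> inner z b"
      "(\<lambda>k. inner (C z) (cJ (x k))) \<longlonglongrightarrow> inner z (cJ b)"
      unfolding sym using assms(3) cJ_Cx by (auto intro: tendsto_inner)
    ultimately show ?thesis
      unfolding cinner_eq_iff using LIMSEQ_unique by blast
  qed
  then show "a \<in> D" using in_domain_iff by blast
  have "inner z (C a - b) = 0" if "z \<in> D" for z
    using adjoint_eq[OF that] cinner_C_symmetric[OF that \<open>a \<in> D\<close>]
    by (simp add: cinner_eq_iff inner_diff_right)
  then show "C a = b"
    using orthogonal_domain_eq_0[of "C a - b"] by simp
qed

lemma norm_shifted_squared_ge:
  assumes "x \<in> D" and "t \<ge> 0"
  shows "(t * norm x)\<^sup>2 + (norm (C x))\<^sup>2 \<le> (norm (t *\<^sub>R x + C x))\<^sup>2"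
proof -
  have "(norm (t *\<^sub>R x + C x))\<^sup>2 = (t * norm x)\<^sup>2 + 2 * t * inner x (C x) + (norm (C x))\<^sup>2"
    by (simp only: power2_norm_eq_inner power_mult_distrib)
      (simp add: inner_commute power2_eq_square algebra_simps)
  then show ?thesis
    using inner_C_nonneg[OF assms(1)] assms(2) by simp
qed

lemma norm_le_norm_shifted:
  assumes "x \<in> D" and "t \<ge> 0"
  shows "t * norm x \<le> norm (t *\<^sub>R x + C x)"
proof (rule power2_le_imp_le)
  show "(t * norm x)\<^sup>2 \<le> (norm (t *\<^sub>R x + C x))\<^sup>2"
    using norm_shifted_squared_ge[OF assms] zero_le_power2[of "norm (C x)"] by linarith
qed (rule norm_ge_zero)

lemma closed_shifted_range:
  assumes "t > 0"
  shows "closed ((\<lambda>x. t *\<^sub>R x + C x) ` D)"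
  unfolding closed_sequential_limits
proof (intro allI impI, elim conjE)
  fix s l assume "\<forall>n. s n \<in> (\<lambda>x. t *\<^sub>R x + C x) ` D" and "s \<longlonglongrightarrow> l"
  then have "\<forall>n. \<exists>x. x \<in> D \<and> s n = t *\<^sub>R x + C x"
    by blast
  then obtain x where xD: "\<And>n. x n \<in> D" and s_eq: "\<And>n. s n = t *\<^sub>R x n + C (x n)"
    by metis
  have shifted_diff: "s m - s n = t *\<^sub>R (x m - x n) + C (x m - x n)" for m n
    using s_eq C_diff[OF xD xD] by (simp add: algebra_simps)
  have "Cauchy x"
  proof (rule CauchyI)
    fix e :: real assume "e > 0"
    then obtain M where M: "\<And>m n. M \<le> m \<Longrightarrow> M \<le> n \<Longrightarrow> norm (s m - s n) < t * e"
      using CauchyD[OF LIMSEQ_imp_Cauchy[OF \<open>s \<longlonglongrightarrow> l\<close>], of "t * e"] \<open>t > 0\<close> by auto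
    have "t * norm (x m - x n) < t * e" if "M \<le> m" "M \<le> n" for m n
    proof -
      have "t * norm (x m - x n) \<le> norm (s m - s n)"
        unfolding shifted_diff using \<open>t > 0\<close>
        by (intro norm_le_norm_shifted subspace_diff[OF subspace_domain xD xD]) simp
      also have "\<dots> < t * e"
        by (rule M[OF that])
      finally show ?thesis .
    qed
    then show "\<exists>M. \<forall>m\<ge>M. \<forall>n\<ge>M. norm (x m - x n) < e"
      using \<open>t > 0\<close> mult_less_cancel_left_pos by blast
  qed
  then obtain a where "x \<longlonglongrightarrow> a"
    using Cauchy_convergent_iff convergent_def by blast
  moreover have "(\<lambda>n. C (x n)) \<longlonglongrightarrow> l - t *\<^sub>R a"
    using tendsto_diff[OF \<open>s \<longlonglongrightarrow> l\<close> tendsto_scaleR[OF tendsto_const[where k = t] \<open>x \<longlonglongrightarrow> a\<close>]]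
    by (simp add: s_eq)
  ultimately have "a \<in> D" and "C a = l - t *\<^sub>R a"
    using closed_graph[where x = x, OF xD] by blast+
  then show "l \<in> (\<lambda>x. t *\<^sub>R x + C x) ` D"
    by (intro image_eqI[of _ _ a]) auto
qed

lemma subspace_shifted_range: "subspace ((\<lambda>x. t *\<^sub>R x + C x) ` D)"
  unfolding subspace_def
proof (intro conjI ballI allI)
  have "0 \<in> D" and "C 0 = 0"
    using subspace_0[OF subspace_domain] C_scaleR[of 0 0] by auto
  then show "0 \<in> (\<lambda>x. t *\<^sub>R x + C x) ` D"
    by (intro image_eqI[of _ _ 0]) auto
next
  fix a b assume "a \<in> (\<lambda>x. t *\<^sub>R x + C x) ` D" and "b \<in> (\<lambda>x. t *\<^sub>R x + C x) ` D"
  then obtain x y where "x \<in> D" "y \<in> D" "a = t *\<^sub>R x + C x" "b = t *\<^sub>R y + C y"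
    by blast
  then show "a + b \<in> (\<lambda>x. t *\<^sub>R x + C x) ` D"
    using subspace_add[OF subspace_domain] C_add
    by (intro image_eqI[of _ _ "x + y"]) (auto simp: algebra_simps)
next
  fix r a assume "a \<in> (\<lambda>x. t *\<^sub>R x + C x) ` D"
  then obtain x where "x \<in> D" "a = t *\<^sub>R x + C x"
    by blast
  then show "r *\<^sub>R a \<in> (\<lambda>x. t *\<^sub>R x + C x) ` D"
    using subspace_scale[OF subspace_domain] C_scaleR
    by (intro image_eqI[of _ _ "r *\<^sub>R x"]) (auto simp: algebra_simps)
qed

lemma orthogonal_shifted_range_eq_0:
  assumes "t > 0" and orth: "\<And>z. z \<in> D \<Longrightarrow> inner (t *\<^sub>R z + C z) w = 0"
  shows "w = 0"
proof -
  \<comment> \<open>testing against z and cJ z shows that w lies in the domain of the adjoint, with C w = - t w\<close>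
  have "cinner (C z) w = cinner z (- t *\<^sub>R w)" if "z \<in> D" for z
  proof -
    have "inner (C z) w = - t * inner z w"
      using orth[OF that] by (simp add: inner_add_left)
    moreover have "inner (C z) (cJ w) = - t * inner z (cJ w)"
      using orth[OF cJ_in_domain[OF that]] inner_cJ_left[of z w] inner_cJ_left[of "C z" w]
      by (simp add: inner_add_left C_cJ[OF that])
    ultimately show ?thesis
      using cJ_scaleR[of "- t" w] by (simp add: cinner_eq_iff)
  qed
  then have "w \<in> D"
    using in_domain_iff by blast
  have "t * inner w w + inner (C w) w = 0"
    using orth[OF \<open>w \<in> D\<close>] by (simp add: inner_add_left)
  then have "t * inner w w \<le> 0"
    using inner_C_nonneg[OF \<open>w \<in> D\<close>] inner_commute[of w "C w"] by linarith
  then show ?thesis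
    using \<open>t > 0\<close> by (metis inner_gt_zero_iff mult_pos_pos not_le)
qed

lemma shifted_surj:
  assumes "t > 0"
  shows "\<exists>x\<in>D. t *\<^sub>R x + C x = y"
proof -
  obtain p where p_range: "p \<in> (\<lambda>x. t *\<^sub>R x + C x) ` D"
    and orth: "\<And>v. v \<in> (\<lambda>x. t *\<^sub>R x + C x) ` D \<Longrightarrow> inner (y - p) v = 0"
    using closed_subspace_orthogonal_decomposition[OF closed_shifted_range[OF assms]
        subspace_shifted_range] by blast
  have "inner (t *\<^sub>R z + C z) (y - p) = 0" if "z \<in> D" for z
    by (subst inner_commute) (rule orth[OF imageI[OF that]])
  then have "y - p = 0"
    by (rule orthogonal_shifted_range_eq_0[OF assms])
  then show ?thesis
    using p_range by auto
qed

lemma shifted_inj: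
  assumes "t > 0" and "x \<in> D" and "x' \<in> D" and "t *\<^sub>R x + C x = t *\<^sub>R x' + C x'"
  shows "x = x'"
proof -
  have "t * norm (x - x') \<le> norm (t *\<^sub>R (x - x') + C (x - x'))"
    using norm_le_norm_shifted[OF subspace_diff[OF subspace_domain assms(2,3)]] assms(1) by simp
  also have "\<dots> = norm ((t *\<^sub>R x + C x) - (t *\<^sub>R x' + C x'))"
    unfolding C_diff[OF assms(2,3)] by (simp add: algebra_simps)
  also have "\<dots> = 0"
    using assms(4) by simp
  finally show ?thesis
    using assms(1) by (simp add: mult_le_0_iff)
qed

text \<open>The resolvent (t + C)^-1; the description is unique only for t > 0.\<close>

definition resolvent :: "real \<Rightarrow> 'a \<Rightarrow> 'a" where
  "resolvent t y = (THE x. x \<in> D \<and> t *\<^sub>R x + C x = y)"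

lemma resolvent_eqI:
  assumes "t > 0" and "x \<in> D" and "t *\<^sub>R x + C x = y"
  shows "resolvent t y = x"
  unfolding resolvent_def using assms shifted_inj by blast

lemma
  assumes "t > 0"
  shows resolvent_in_domain: "resolvent t y \<in> D"
    and shifted_resolvent: "t *\<^sub>R resolvent t y + C (resolvent t y) = y"
proof -
  obtain x where "x \<in> D" and "t *\<^sub>R x + C x = y"
    using shifted_surj[OF assms] by blast
  moreover from this have "resolvent t y = x"
    by (rule resolvent_eqI[OF assms])
  ultimately show "resolvent t y \<in> D" and "t *\<^sub>R resolvent t y + C (resolvent t y) = y"
    by simp_all
qed

lemma linear_resolvent:
  assumes "t > 0"
  shows "linear (resolvent t)"
proof
  fix a b :: 'a and r :: real
  have a_in: "resolvent t a \<in> D" and b_in: "resolvent t b \<in> D"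
    using resolvent_in_domain[OF assms] by blast+
  have "t *\<^sub>R (resolvent t a + resolvent t b) + C (resolvent t a + resolvent t b)
      = (t *\<^sub>R resolvent t a + C (resolvent t a)) + (t *\<^sub>R resolvent t b + C (resolvent t b))"
    using C_add[OF a_in b_in] by (simp add: algebra_simps)
  then show "resolvent t (a + b) = resolvent t a + resolvent t b"
    using subspace_add[OF subspace_domain a_in b_in]
    by (intro resolvent_eqI[OF assms]) (simp_all add: shifted_resolvent[OF assms])
  have "t *\<^sub>R (r *\<^sub>R resolvent t a) + C (r *\<^sub>R resolvent t a)
      = r *\<^sub>R (t *\<^sub>R resolvent t a + C (resolvent t a))"
    using C_scaleR[OF a_in] by (simp add: algebra_simps)
  then show "resolvent t (r *\<^sub>R a) = r *\<^sub>R resolvent t a"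
    using subspace_scale[OF subspace_domain a_in]
    by (intro resolvent_eqI[OF assms]) (simp_all add: shifted_resolvent[OF assms])
qed

lemma norm_resolvent_le:
  assumes "t > 0"
  shows "t * norm (resolvent t y) \<le> norm y"
  using norm_le_norm_shifted[OF resolvent_in_domain[OF assms] less_imp_le[OF assms]]
  by (simp add: shifted_resolvent[OF assms])

lemma resolvent_split:
  assumes "t > 0" and "x \<in> D"
  shows "t *\<^sub>R resolvent t x + resolvent t (C x) = x"
  using resolvent_eqI[OF assms, of "t *\<^sub>R x + C x"] linear_resolvent[OF assms(1)]
  by (simp add: linear_add linear_scale)

lemma C_resolvent_commute:
  assumes "t > 0" and "x \<in> D"
  shows "C (resolvent t x) = resolvent t (C x)"
  using resolvent_split[OF assms] shifted_resolvent[OF assms(1), of x]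
  by (metis add.commute add_right_cancel)

text \<open>The J_n of the header, indexed from 0 so that n + 1 > 0.\<close>

definition approx_id :: "nat \<Rightarrow> 'a \<Rightarrow> 'a" where
  "approx_id n y = real (Suc n) *\<^sub>R resolvent (real (Suc n)) y"

lemma approx_id_in_domain: "approx_id n y \<in> D"
  unfolding approx_id_def by (intro subspace_scale[OF subspace_domain] resolvent_in_domain) simp

lemma norm_approx_id_le: "norm (approx_id n y) \<le> norm y"
  using norm_resolvent_le[of "real (Suc n)" y] by (simp add: approx_id_def)

lemma bounded_linear_approx_id: "bounded_linear (approx_id n)"
proof (rule bounded_linear_intro[where K = 1])
  have lin: "linear (resolvent (real (Suc n)))"
    by (rule linear_resolvent) simp
  show "approx_id n (x + y) = approx_id n x + approx_id n y" for x y
    unfolding approx_id_def linear_add[OF lin] by (rule scaleR_add_right)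
  show "approx_id n (r *\<^sub>R x) = r *\<^sub>R approx_id n x" for r x
    unfolding approx_id_def linear_scale[OF lin] by (rule scaleR_left_commute)
  show "norm (approx_id n x) \<le> norm x * 1" for x
    using norm_approx_id_le[of n x] by simp
qed

lemma C_approx_id: "C (approx_id n y) = real (Suc n) *\<^sub>R (y - approx_id n y)"
proof -
  define t where "t = real (Suc n)"
  have "t > 0" by (simp add: t_def)
  have "C (resolvent t y) = y - t *\<^sub>R resolvent t y"
    using shifted_resolvent[OF \<open>t > 0\<close>, of y] by (metis add_diff_cancel_left')
  then show ?thesis
    unfolding approx_id_def t_def[symmetric]
    by (simp add: C_scaleR[OF resolvent_in_domain[OF \<open>t > 0\<close>]])
qed

lemma bounded_linear_C_approx_id: "bounded_linear (\<lambda>y. C (approx_id n y))"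
  unfolding C_approx_id
  by (intro bounded_linear_compose[OF bounded_linear_scaleR_right]
      bounded_linear_sub bounded_linear_ident bounded_linear_approx_id)

lemma approx_id_minus_id:
  assumes "x \<in> D"
  shows "approx_id n x - x = - resolvent (real (Suc n)) (C x)"
  using resolvent_split[OF _ assms, of "real (Suc n)"] by (simp add: approx_id_def algebra_simps)

lemma C_approx_id_commute:
  assumes "x \<in> D"
  shows "C (approx_id n x) = approx_id n (C x)"
  using C_resolvent_commute[OF _ assms] C_scaleR[OF resolvent_in_domain]
  by (simp add: approx_id_def)

lemma approx_id_tendsto: "(\<lambda>n. approx_id n y) \<longlonglongrightarrow> y"
proof (rule tendsto_id_on_dense_equi_lipschitz[OF closure_domain])
  show "norm (approx_id n x - approx_id n z) \<le> 1 * norm (x - z)" for n x z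
    using norm_approx_id_le[of n "x - z"]
    by (simp add: linear_diff[OF bounded_linear.linear[OF bounded_linear_approx_id]])
  show "(\<lambda>n. approx_id n z) \<longlonglongrightarrow> z" if "z \<in> D" for z
  proof -
    have "norm (approx_id n z - z) \<le> norm (C z) / real (Suc n)" for n
      unfolding approx_id_minus_id[OF that] norm_minus_cancel
      by (metis mult.commute norm_resolvent_le of_nat_0_less_iff pos_le_divide_eq zero_less_Suc)
    then have "(\<lambda>n. approx_id n z - z) \<longlonglongrightarrow> 0"
      by (intro Lim_null_comparison[OF always_eventually LIMSEQ_Suc[OF lim_const_over_n]] allI)
    then show ?thesis
      by (rule LIM_zero_cancel)
  qed
qed

lemma Cauchy_C_approx_id_iff: "Cauchy (\<lambda>n. C (approx_id n x)) \<longleftrightarrow> x \<in> D"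
proof
  assume "Cauchy (\<lambda>n. C (approx_id n x))"
  then obtain b where "(\<lambda>n. C (approx_id n x)) \<longlonglongrightarrow> b"
    using Cauchy_convergent_iff convergent_def by blast
  then show "x \<in> D"
    using closed_graph[where x = "\<lambda>n. approx_id n x"] approx_id_in_domain approx_id_tendsto
    by blast
next
  assume "x \<in> D"
  then have "(\<lambda>n. C (approx_id n x)) \<longlonglongrightarrow> C x"
    by (simp add: C_approx_id_commute approx_id_tendsto)
  then show "Cauchy (\<lambda>n. C (approx_id n x))"
    by (rule LIMSEQ_imp_Cauchy)
qed

context
  fixes L :: "'a \<Rightarrow> 'a"
  assumes L: "bounded_op_from_graph D C L"
begin

lemma L_add: "x \<in> D \<Longrightarrow> y \<in> D \<Longrightarrow> L (x + y) = L x + L y"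
  using L unfolding bounded_op_from_graph_def by blast

lemma L_scaleR: "x \<in> D \<Longrightarrow> L (r *\<^sub>R x) = r *\<^sub>R L x"
  using L cscale_of_real[of r] unfolding bounded_op_from_graph_def by metis

lemma L_diff:
  assumes "x \<in> D" and "y \<in> D"
  shows "L (x - y) = L x - L y"
  using L_add[OF subspace_diff[OF subspace_domain assms] assms(2)] by simp

lemma bounded_linear_L_approx_id: "bounded_linear (\<lambda>y. L (approx_id n y))"
proof -
  obtain K where "K \<ge> 0" and K: "\<And>x. x \<in> D \<Longrightarrow> norm (L x) \<le> K * (norm x + norm (C x))"
    using bounded_op_from_graph_bound[OF L] by blast
  show ?thesis
  proof (rule bounded_linear_intro[where K = "K * (1 + 2 * real (Suc n))"])
    show "L (approx_id n (x + y)) = L (approx_id n x) + L (approx_id n y)" for x y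
      using L_add[OF approx_id_in_domain approx_id_in_domain]
      by (simp add: linear_add[OF bounded_linear.linear[OF bounded_linear_approx_id]])
    show "L (approx_id n (r *\<^sub>R x)) = r *\<^sub>R L (approx_id n x)" for r x
      using L_scaleR[OF approx_id_in_domain]
      by (simp add: linear_scale[OF bounded_linear.linear[OF bounded_linear_approx_id]])
    show "norm (L (approx_id n x)) \<le> norm x * (K * (1 + 2 * real (Suc n)))" for x
    proof -
      have "norm (C (approx_id n x)) \<le> real (Suc n) * (norm x + norm (approx_id n x))"
        unfolding C_approx_id by (simp add: mult_left_mono norm_triangle_ineq4)
      then have "norm (approx_id n x) + norm (C (approx_id n x)) \<le> (1 + 2 * real (Suc n)) * norm x"
        using norm_approx_id_le[of n x]
          mult_left_mono[OF norm_approx_id_le[of n x], of "real (Suc n)"]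
        by (simp add: algebra_simps)
      then have "norm (L (approx_id n x)) \<le> K * ((1 + 2 * real (Suc n)) * norm x)"
        using K[OF approx_id_in_domain[of n x]] \<open>K \<ge> 0\<close> by (meson mult_left_mono order_trans)
      then show ?thesis
        by (simp add: ac_simps)
    qed
  qed
qed

lemma L_approx_id_tendsto:
  assumes "x \<in> D"
  shows "(\<lambda>n. L (approx_id n x)) \<longlonglongrightarrow> L x"
proof -
  obtain K where K: "\<And>x. x \<in> D \<Longrightarrow> norm (L x) \<le> K * (norm x + norm (C x))"
    using bounded_op_from_graph_bound[OF L] by blast
  have bound: "norm (L (approx_id n x) - L x)
      \<le> K * (norm (approx_id n x - x) + norm (approx_id n (C x) - C x))" for n
  proof -
    have "norm (L (approx_id n x) - L x) = norm (L (approx_id n x - x))"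
      by (simp add: L_diff[OF approx_id_in_domain assms])
    also have "\<dots> \<le> K * (norm (approx_id n x - x) + norm (C (approx_id n x - x)))"
      by (rule K[OF subspace_diff[OF subspace_domain approx_id_in_domain assms]])
    also have "C (approx_id n x - x) = approx_id n (C x) - C x"
      by (simp add: C_diff[OF approx_id_in_domain assms] C_approx_id_commute[OF assms])
    finally show ?thesis .
  qed
  have "(\<lambda>n. K * (norm (approx_id n x - x) + norm (approx_id n (C x) - C x))) \<longlonglongrightarrow> 0"
    using tendsto_mult_right_zero[OF tendsto_add_zero[OF
          tendsto_norm_zero[OF LIM_zero[OF approx_id_tendsto]]
          tendsto_norm_zero[OF LIM_zero[OF approx_id_tendsto]]]] .
  then have "(\<lambda>n. L (approx_id n x) - L x) \<longlonglongrightarrow> 0"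
    by (rule Lim_null_comparison[OF always_eventually[OF allI[OF bound]]])
  then show ?thesis
    by (rule LIM_zero_cancel)
qed

end

end

theorem lemma5p2:
  fixes D :: "'a::complex_hilbert set" and C L :: "'a \<Rightarrow> 'a"
  assumes "separable_space (euclidean :: 'a topology)"
    and "self_adjoint_op D C"
    and "positive_op D C"
    and "bounded_op_from_graph D C L"
  shows "(\<lambda>x. L (pi_C D x)) \<in> measurable borel borel"
proof -
  interpret positive_self_adjoint D C
    using assms(2,3) by unfold_locales
  have "{x. Cauchy (\<lambda>n. C (approx_id n x))} \<in> sets borel"
    by (intro sets_borel_Cauchy_continuous linear_continuous_on bounded_linear_C_approx_id)
  then have "D \<in> sets borel"
    by (simp add: Cauchy_C_approx_id_iff)
  then have "(\<lambda>x. if x \<in> D then L x else L 0) \<in> borel_measurable borel"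
    using assms(4) linear_continuous_on[OF bounded_linear_L_approx_id] L_approx_id_tendsto
    by (intro borel_measurable_if_LIMSEQ_continuous[where f = "\<lambda>n y. L (approx_id n y)"])
  moreover have "(\<lambda>x. L (pi_C D x)) = (\<lambda>x. if x \<in> D then L x else L 0)"
    by (auto simp: pi_C_def)
  ultimately show ?thesis
    by simp
qed

end
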